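(* Let $D$ be an arbitrary subset of $\mathbb{Z}^d$ and $g$ a function in $\ell^1(D)$. Let $k,t$ be positive integers with $k<t$ and let $r>0$. For any $x\in\overline D$, $$P\Big(\Big\|\frac1tL^D_t-g^2\Big\|_{1,D}\le r,\ \tau<\infty\Big)\le\frac{2\,P_x\Big(\Big\|\frac1tL^D_t-g^2\Big\|_{1,D}\le r+4\frac{k}{t-k},\ \tau<\infty\Big)}{P_x(S_k=0)+P_x(S_{k-1}=0)}.$$
   Context: $P_x$ is the law of the simple random walk $(S_j)$ on $\mathbb{Z}^d$ started at $x$, $P=P_0$. $L_j(y)=\sum_{i=0}^{j-1}1_{\{S_i=y\}}$, $L_j(D)=\sum_{y\in D}L_j(y)$, $\tau=\tau(D,t)=\inf\{j\ge1:L_j(D)=t\}$, and $L^D_t(y)=L_{\tau(D,t)}(y)$ for $y\in D$. $\|f\|_{1,D}=\sum_{y\in D}|f(y)|$. $\overline D=D\cup\{x:\exists y\in D,|x-y|=1\}$. *)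

theory Defs
  imports "HOL-Probability.Probability"
begin

text \<open>Simple random walk on the lattice (int ^ 'd), d = CARD('d).\<close>

definition srw_steps :: "(int ^ 'd) set" where
  "srw_steps = {v. \<exists>i. v = axis i 1 \<or> v = axis i (-1)}"

definition srw_step_pmf :: "(int ^ 'd) pmf" where
  "srw_step_pmf = pmf_of_set srw_steps"

definition srw_space :: "(int ^ 'd) stream measure" where
  "srw_space = stream_space (measure_pmf srw_step_pmf)"

definition srw_pos :: "int ^ 'd \<Rightarrow> (int ^ 'd) stream \<Rightarrow> nat \<Rightarrow> int ^ 'd" where
  "srw_pos x w j = x + (\<Sum>i<j. w !! i)"

definition srw_prob :: "int ^ 'd \<Rightarrow> ((nat \<Rightarrow> int ^ 'd) \<Rightarrow> bool) \<Rightarrow> real" where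
  "srw_prob x A = measure srw_space {w \<in> space srw_space. A (srw_pos x w)}"

definition loc_time :: "(nat \<Rightarrow> 'a) \<Rightarrow> nat \<Rightarrow> 'a \<Rightarrow> nat" where
  "loc_time S j y = card {i. i < j \<and> S i = y}"

definition loc_time_set :: "(nat \<Rightarrow> 'a) \<Rightarrow> nat \<Rightarrow> 'a set \<Rightarrow> nat" where
  "loc_time_set S j D = card {i. i < j \<and> S i \<in> D}"

definition hit_tau :: "(nat \<Rightarrow> 'a) \<Rightarrow> 'a set \<Rightarrow> nat \<Rightarrow> enat" where
  "hit_tau S D t = (if \<exists>j\<ge>1. loc_time_set S j D = t
                    then enat (LEAST j. j \<ge> 1 \<and> loc_time_set S j D = t) else \<infinity>)"

text \<open>L^D_t(y) = L_{tau(D,t)}(y) (meaningful on the event tau < \<infinity>).\<close>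
definition loc_time_D :: "(nat \<Rightarrow> 'a) \<Rightarrow> 'a set \<Rightarrow> nat \<Rightarrow> 'a \<Rightarrow> nat" where
  "loc_time_D S D t y = loc_time S (the_enat (hit_tau S D t)) y"

definition norm1_on :: "'a set \<Rightarrow> ('a \<Rightarrow> real) \<Rightarrow> real" where
  "norm1_on D f = (\<Sum>\<^sub>\<infinity>y\<in>D. \<bar>f y\<bar>)"

text \<open>Closure: D together with its nearest neighbours.\<close>
definition lattice_closure :: "(int ^ 'd) set \<Rightarrow> (int ^ 'd) set" where
  "lattice_closure D = D \<union> {x. \<exists>y\<in>D. x - y \<in> srw_steps}"

end

theory Submission
  imports Defs
begin

text \<open>Let \<open>A\<^sub>c\<close> be the event that \<open>\<tau> < \<infinity>\<close> and \<open>\<parallel>L\<^sup>D\<^sub>t/t - g\<^sup>2\<parallel>\<^sub>1\<^sub>,\<^sub>D \<le> c\<close>. If the walk from \<open>x\<close>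
  is at \<open>0\<close> at time \<open>j\<close> and the walk restarted there lies in \<open>A\<^sub>r\<close>, then the original walk
  lies in \<open>A\<^sub>c\<close> with \<open>c = r + 2j/t\<close>: the extra \<open>L\<^sub>j(D) \<le> j\<close> visits before time \<open>j\<close> make \<open>\<tau>\<close>
  come earlier, and the two local time profiles differ by those visits and by the visits
  cut off at the end, at most \<open>2 L\<^sub>j(D)\<close> in \<open>\<ell>\<^sup>1\<close>. The Markov property at the fixed time \<open>j\<close>
  turns this inclusion into \<open>P\<^sub>x(S\<^sub>j = 0) P(A\<^sub>r) \<le> P\<^sub>x(A\<^sub>c)\<close>; the theorem adds the cases
  \<open>j = k\<close> and \<open>j = k - 1\<close>, using \<open>2j/t \<le> 4k/(t - k)\<close>.\<close>

lemma loc_time_Suc: "loc_time S (Suc n) y = loc_time S n y + (if S n = y then 1 else 0)"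
proof -
  have "{i. i < Suc n \<and> S i = y} = {i. i < n \<and> S i = y} \<union> (if S n = y then {n} else {})"
    by (auto simp: less_Suc_eq)
  then show ?thesis unfolding loc_time_def by (auto simp: card_insert_if)
qed

lemma loc_time_set_Suc:
  "loc_time_set S (Suc n) D = loc_time_set S n D + (if S n \<in> D then 1 else 0)"
proof -
  have "{i. i < Suc n \<and> S i \<in> D} = {i. i < n \<and> S i \<in> D} \<union> (if S n \<in> D then {n} else {})"
    by (auto simp: less_Suc_eq)
  then show ?thesis unfolding loc_time_set_def by (auto simp: card_insert_if)
qed

lemma loc_time_0 [simp]: "loc_time S 0 y = 0"
  by (simp add: loc_time_def)

lemma loc_time_set_0 [simp]: "loc_time_set S 0 D = 0"
  by (simp add: loc_time_set_def)

lemma loc_time_set_le: "loc_time_set S n D \<le> n"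
proof -
  have "card {i. i < n \<and> S i \<in> D} \<le> card {..<n}" by (rule card_mono) auto
  then show ?thesis unfolding loc_time_set_def by simp
qed

lemma loc_time_mono: "n \<le> m \<Longrightarrow> loc_time S n y \<le> loc_time S m y"
  unfolding loc_time_def by (rule card_mono) auto

lemma loc_time_eq_0: "y \<notin> S ` {..<n} \<Longrightarrow> loc_time S n y = 0"
  unfolding loc_time_def by (auto intro!: card_eq_0_iff[THEN iffD2])

lemma loc_time_cong: "(\<And>i. i < n \<Longrightarrow> S i = S' i) \<Longrightarrow> loc_time S n y = loc_time S' n y"
  unfolding loc_time_def by (metis (lifting))

lemma loc_time_set_cong:
  "(\<And>i. i < n \<Longrightarrow> S i = S' i) \<Longrightarrow> loc_time_set S n D = loc_time_set S' n D"
  unfolding loc_time_set_def by (metis (lifting))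

lemma loc_time_add: "loc_time S (j + n) y = loc_time S j y + loc_time (\<lambda>i. S (i + j)) n y"
  by (induction n) (simp_all add: loc_time_Suc add.commute)

lemma loc_time_set_add:
  "loc_time_set S (j + n) D = loc_time_set S j D + loc_time_set (\<lambda>i. S (i + j)) n D"
  by (induction n) (simp_all add: loc_time_set_Suc add.commute)

lemma loc_time_set_eq_sum:
  assumes "finite F" "F \<subseteq> D" and "\<And>i. i < n \<Longrightarrow> S i \<in> D \<Longrightarrow> S i \<in> F"
  shows "loc_time_set S n D = (\<Sum>y\<in>F. loc_time S n y)"
  using assms(3)
proof (induction n)
  case (Suc n)
  have "(if S n \<in> D then 1 else 0) = (\<Sum>y\<in>F. (if S n = y then 1 else 0::nat))"
    using Suc.prems assms(1,2) by auto
  with Suc show ?case by (simp add: loc_time_set_Suc loc_time_Suc sum.distrib)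
qed simp

lemma loc_time_set_attains:
  assumes "0 < t" "t \<le> loc_time_set S n D"
  shows "\<exists>m\<le>n. 1 \<le> m \<and> loc_time_set S m D = t"
  using assms(2)
proof (induction n)
  case (Suc n)
  show ?case
  proof (cases "t \<le> loc_time_set S n D")
    case True
    then obtain m where "m \<le> n" "1 \<le> m" "loc_time_set S m D = t"
      using Suc.IH by blast
    then show ?thesis by (intro exI[of _ m]) simp
  next
    case False
    with Suc.prems have "loc_time_set S (Suc n) D = t"
      by (auto simp: loc_time_set_Suc split: if_splits)
    then show ?thesis by (intro exI[of _ "Suc n"]) simp
  qed
qed (use assms(1) in simp)

lemma hit_tau_eq_enat_iff:
  "hit_tau S D t = enat m \<longleftrightarrow>
     1 \<le> m \<and> loc_time_set S m D = t \<and> (\<forall>j. 1 \<le> j \<and> j < m \<longrightarrow> loc_time_set S j D \<noteq> t)"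
proof
  assume h: "hit_tau S D t = enat m"
  then have ex: "\<exists>j\<ge>1. loc_time_set S j D = t"
    unfolding hit_tau_def by (auto split: if_splits)
  with h have "m = (LEAST j. j \<ge> 1 \<and> loc_time_set S j D = t)"
    unfolding hit_tau_def by simp
  then show "1 \<le> m \<and> loc_time_set S m D = t \<and> (\<forall>j. 1 \<le> j \<and> j < m \<longrightarrow> loc_time_set S j D \<noteq> t)"
    using LeastI_ex[OF ex] not_less_Least[of _ "\<lambda>j. j \<ge> 1 \<and> loc_time_set S j D = t"]
    by auto
next
  assume h: "1 \<le> m \<and> loc_time_set S m D = t \<and> (\<forall>j. 1 \<le> j \<and> j < m \<longrightarrow> loc_time_set S j D \<noteq> t)"
  then have "(LEAST j. j \<ge> 1 \<and> loc_time_set S j D = t) = m"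
    by (intro Least_equality) (auto simp: not_less[symmetric])
  with h show "hit_tau S D t = enat m" unfolding hit_tau_def by auto
qed

lemma hit_tau_le:
  assumes "0 < t" "t \<le> loc_time_set S n D"
  obtains \<tau> where "hit_tau S D t = enat \<tau>" "\<tau> \<le> n"
proof -
  obtain m where m: "m \<le> n" "1 \<le> m" "loc_time_set S m D = t"
    using loc_time_set_attains[OF assms] by blast
  let ?\<tau> = "LEAST j. j \<ge> 1 \<and> loc_time_set S j D = t"
  have "hit_tau S D t = enat ?\<tau>"
    using m unfolding hit_tau_def by auto
  moreover have "?\<tau> \<le> n"
    using Least_le[of "\<lambda>j. j \<ge> 1 \<and> loc_time_set S j D = t" m] m by simp
  ultimately show thesis by (rule that)
qed

lemma hit_tau_cong:
  assumes "hit_tau S D t = enat m" "\<And>i. i < m \<Longrightarrow> S i = S' i"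
  shows "hit_tau S' D t = enat m"
proof -
  have "\<And>j. j \<le> m \<Longrightarrow> loc_time_set S j D = loc_time_set S' j D"
    by (rule loc_time_set_cong) (use assms(2) in auto)
  with assms(1) show ?thesis unfolding hit_tau_eq_enat_iff by auto
qed

lemma loc_time_D_eq: "hit_tau S D t = enat m \<Longrightarrow> loc_time_D S D t y = loc_time S m y"
  unfolding loc_time_D_def by simp

text \<open>If \<open>|f|\<close> is not summable on \<open>D\<close>, neither is \<open>|h|\<close>, and both norms are the junk value \<open>0\<close>.\<close>

lemma norm1_on_le_finite_perturb:
  fixes f h :: "'a \<Rightarrow> real"
  assumes F: "finite F" "F \<subseteq> D" and eq: "\<And>y. y \<in> D - F \<Longrightarrow> h y = f y"
  shows "norm1_on D h \<le> norm1_on D f + (\<Sum>y\<in>F. \<bar>h y - f y\<bar>)"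
proof -
  define e where "e y = \<bar>h y\<bar> - \<bar>f y\<bar>" for y
  have "{y\<in>D. e y \<noteq> 0} \<subseteq> F"
  proof
    fix y assume "y \<in> {y\<in>D. e y \<noteq> 0}"
    then show "y \<in> F" using eq[of y] by (cases "y \<in> F") (auto simp: e_def)
  qed
  then have fin: "finite {y\<in>D. e y \<noteq> 0}" and fin': "finite {y\<in>D. - e y \<noteq> 0}"
    using F(1) by (auto intro: finite_subset)
  have e_sum: "e summable_on D" "(\<lambda>y. - e y) summable_on D"
    using finite_nonzero_values_imp_summable_on[OF fin] finite_nonzero_values_imp_summable_on[OF fin']
    by auto
  have "infsum e D = infsum e F"
    by (rule infsum_cong_neutral) (use eq F in \<open>auto simp: e_def\<close>)
  also have "\<dots> \<le> (\<Sum>y\<in>F. \<bar>h y - f y\<bar>)"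
    using F(1) by (auto intro!: sum_mono simp: e_def)
  finally have e_le: "infsum e D \<le> (\<Sum>y\<in>F. \<bar>h y - f y\<bar>)" .
  show ?thesis
  proof (cases "(\<lambda>y. \<bar>f y\<bar>) summable_on D")
    case True
    have "infsum (\<lambda>y. \<bar>h y\<bar>) D = infsum (\<lambda>y. \<bar>f y\<bar> + e y) D"
      by (simp add: e_def)
    also have "\<dots> = infsum (\<lambda>y. \<bar>f y\<bar>) D + infsum e D"
      by (rule infsum_add[OF True e_sum(1)])
    finally show ?thesis using e_le unfolding norm1_on_def by simp
  next
    case False
    have "\<not> (\<lambda>y. \<bar>h y\<bar>) summable_on D"
    proof
      assume "(\<lambda>y. \<bar>h y\<bar>) summable_on D"
      from summable_on_add[OF this e_sum(2)] have "(\<lambda>y. \<bar>f y\<bar>) summable_on D"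
        by (simp add: e_def)
      with False show False ..
    qed
    with False show ?thesis
      by (simp add: norm1_on_def infsum_not_exists sum_nonneg)
  qed
qed

text \<open>The profiles \<open>L\<^sub>\<tau>\<close> and \<open>L\<^sub>n - L\<^sub>j\<close> differ by the visits before time \<open>j\<close> and those
  between \<open>\<tau>\<close> and \<open>n\<close>.\<close>

lemma sum_abs_loc_time_diff_le:
  assumes "\<tau> \<le> n" "j \<le> n" and F: "finite F" "F \<subseteq> D" "D \<inter> S ` {..<n} \<subseteq> F"
  shows "(\<Sum>y\<in>F. \<bar>real (loc_time S \<tau> y) - (real (loc_time S n y) - real (loc_time S j y))\<bar>)
    \<le> real (loc_time_set S n D) - real (loc_time_set S \<tau> D) + real (loc_time_set S j D)"
proof -
  have sum_F: "real (loc_time_set S n' D) = (\<Sum>y\<in>F. real (loc_time S n' y))" if "n' \<le> n" for n'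
    using loc_time_set_eq_sum[OF F(1,2), of n' S] that F(3) by force
  have "(\<Sum>y\<in>F. \<bar>real (loc_time S \<tau> y) - (real (loc_time S n y) - real (loc_time S j y))\<bar>)
      \<le> (\<Sum>y\<in>F. real (loc_time S n y) - real (loc_time S \<tau> y) + real (loc_time S j y))"
    by (rule sum_mono) (use loc_time_mono[OF \<open>\<tau> \<le> n\<close>] in \<open>auto simp: abs_le_iff\<close>)
  also have "\<dots> = real (loc_time_set S n D) - real (loc_time_set S \<tau> D) + real (loc_time_set S j D)"
    using sum_F[of n] sum_F[OF \<open>\<tau> \<le> n\<close>] sum_F[OF \<open>j \<le> n\<close>] by (simp add: sum.distrib sum_subtractf)
  finally show ?thesis .
qed

definition profile_close :: "'a set \<Rightarrow> ('a \<Rightarrow> real) \<Rightarrow> nat \<Rightarrow> real \<Rightarrow> (nat \<Rightarrow> 'a) \<Rightarrow> bool" where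
  "profile_close D g t c S \<longleftrightarrow>
     norm1_on D (\<lambda>y. real (loc_time_D S D t y) / real t - (g y)\<^sup>2) \<le> c \<and> hit_tau S D t < \<infinity>"

lemma profile_close_shift:
  assumes "0 < t" and close: "profile_close D g t r (\<lambda>i. S (i + j))"
  shows "profile_close D g t (r + 2 * real j / real t) S"
proof -
  let ?S' = "\<lambda>i. S (i + j)"
  obtain m where m: "hit_tau ?S' D t = enat m"
    using close by (cases "hit_tau ?S' D t") (auto simp: profile_close_def)
  define n where "n = j + m"
  have Ln: "loc_time_set S n D = loc_time_set S j D + t"
    using loc_time_set_add[of S j m D] m by (simp add: n_def hit_tau_eq_enat_iff)
  obtain \<tau> where \<tau>: "hit_tau S D t = enat \<tau>" "\<tau> \<le> n"
    using hit_tau_le[OF \<open>0 < t\<close>, of S n D] Ln by auto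
  define F where "F = D \<inter> S ` {..<n}"
  define L L' where "L y = real (loc_time_D S D t y)" and "L' y = real (loc_time_D ?S' D t y)" for y
  have L: "L y = real (loc_time S \<tau> y)" for y
    using loc_time_D_eq[OF \<tau>(1)] by (simp add: L_def)
  have L': "L' y = real (loc_time S n y) - real (loc_time S j y)" for y
    using loc_time_D_eq[OF m] loc_time_add[of S j m y] by (simp add: L'_def n_def)
  have outside: "L y = L' y" if "y \<in> D - F" for y
  proof -
    have "loc_time S n y = 0"
      using that by (intro loc_time_eq_0) (auto simp: F_def)
    with loc_time_mono[OF \<tau>(2), of S y] loc_time_mono[of j n S y] show ?thesis
      by (simp add: L L' n_def)
  qed
  have "(\<Sum>y\<in>F. \<bar>L y - L' y\<bar>) \<le> 2 * real (loc_time_set S j D)"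
    using sum_abs_loc_time_diff_le[OF \<tau>(2), of j F D S] Ln \<tau>(1)
    by (simp add: L L' F_def n_def hit_tau_eq_enat_iff)
  also have "\<dots> \<le> 2 * real j"
    using loc_time_set_le[of S j D] by simp
  finally have dist: "(\<Sum>y\<in>F. \<bar>L y - L' y\<bar>) \<le> 2 * real j" .
  have "norm1_on D (\<lambda>y. L y / real t - (g y)\<^sup>2)
      \<le> norm1_on D (\<lambda>y. L' y / real t - (g y)\<^sup>2)
        + (\<Sum>y\<in>F. \<bar>(L y / real t - (g y)\<^sup>2) - (L' y / real t - (g y)\<^sup>2)\<bar>)"
    by (rule norm1_on_le_finite_perturb) (auto simp: F_def outside)
  also have "(\<Sum>y\<in>F. \<bar>(L y / real t - (g y)\<^sup>2) - (L' y / real t - (g y)\<^sup>2)\<bar>)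
      = (\<Sum>y\<in>F. \<bar>L y - L' y\<bar>) / real t"
    by (simp add: sum_divide_distrib flip: diff_divide_distrib)
  also have "norm1_on D (\<lambda>y. L' y / real t - (g y)\<^sup>2) + (\<Sum>y\<in>F. \<bar>L y - L' y\<bar>) / real t
      \<le> r + 2 * real j / real t"
    using close dist \<open>0 < t\<close> by (intro add_mono divide_right_mono) (auto simp: profile_close_def L'_def)
  finally show ?thesis
    using \<tau>(1) by (simp add: profile_close_def L_def)
qed

lemma space_srw_space [simp]: "space srw_space = UNIV"
  by (simp add: srw_space_def space_stream_space)

lemma prob_space_srw_space: "prob_space srw_space"
  unfolding srw_space_def by (rule prob_space.prob_space_stream_space[OF prob_space_measure_pmf])

lemma emeasure_srw_space_UNIV [simp]: "emeasure srw_space UNIV = 1"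
  using prob_space.emeasure_space_1[OF prob_space_srw_space] by simp

lemma sets_srw_space: "sets srw_space = sets (stream_space (count_space UNIV))"
  unfolding srw_space_def by (rule sets_stream_space_cong) (simp add: sets_measure_pmf_count_space)

lemma sets_srw_space_stake:
  fixes P :: "(int ^ 'd) list \<Rightarrow> bool"
  shows "{w. P (stake m w)} \<in> sets srw_space"
proof -
  have "stake m \<in> measurable (stream_space (count_space UNIV)) (count_space (UNIV :: (int ^ 'd) list set))"
    by (rule measurable_stake)
  then have "stake m \<in> measurable srw_space (count_space (UNIV :: (int ^ 'd) list set))"
    by (simp add: measurable_def sets_srw_space space_stream_space)
  from measurable_sets[OF this, of "{l. P l}"] show ?thesis
    by (simp add: vimage_def)
qed

lemma sets_srw_space_sdrop: "E \<in> sets srw_space \<Longrightarrow> {w. sdrop j w \<in> E} \<in> sets srw_space"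
  using measurable_sets[OF measurable_sdrop[of j "measure_pmf srw_step_pmf"], of E]
  by (simp add: srw_space_def[symmetric] vimage_def)

lemma srw_pos_stake: "srw_pos x w j = x + sum_list (stake j w)"
  by (induction j) (simp_all add: srw_pos_def stake_Suc add.assoc del: stake.simps(2))

lemma sets_srw_space_pos: "{w. P (srw_pos x w j)} \<in> sets srw_space"
  using sets_srw_space_stake[of "\<lambda>l. P (x + sum_list l)" j] by (simp add: srw_pos_stake)

lemma srw_pos_Suc: "srw_pos x w (Suc j) = srw_pos (x + shd w) (stl w) j"
  unfolding srw_pos_def sum.lessThan_Suc_shift by (simp add: add.assoc)

lemma srw_pos_shift_stake: "i \<le> m \<Longrightarrow> srw_pos x (stake m w @- v) i = srw_pos x w i"
  unfolding srw_pos_def by (intro arg_cong[where f="\<lambda>s. x + s"] sum.cong) auto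

lemma srw_pos_sdrop: "srw_pos x w j = 0 \<Longrightarrow> srw_pos 0 (sdrop j w) i = srw_pos x w (i + j)"
  by (induction i) (simp_all add: srw_pos_def sdrop_snth add.commute add.left_commute)

text \<open>An event on which \<open>\<tau>\<close> is finite and which only depends on the path up to \<open>\<tau>\<close> is the
  countable union over \<open>m\<close> of events depending on the first \<open>m\<close> steps.\<close>

lemma sets_srw_space_stopped:
  assumes stopped: "\<And>S S' m. hit_tau S D t = enat m \<Longrightarrow> (\<And>i. i \<le> m \<Longrightarrow> S i = S' i) \<Longrightarrow> B S \<Longrightarrow> B S'"
    and finite: "\<And>S. B S \<Longrightarrow> hit_tau S D t < \<infinity>"
  shows "{w. B (srw_pos x w)} \<in> sets srw_space"
proof -
  define ext where "ext l = srw_pos x (l @- sconst 0)" for l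
  define Q where "Q m l \<longleftrightarrow> hit_tau (ext l) D t = enat m \<and> B (ext l)" for m l
  have agree: "i \<le> m \<Longrightarrow> srw_pos x w i = ext (stake m w) i" for i m w
    by (simp add: ext_def srw_pos_shift_stake)
  have "{w. B (srw_pos x w)} = (\<Union>m. {w. Q m (stake m w)})"
  proof (intro set_eqI iffI)
    fix w assume "w \<in> {w. B (srw_pos x w)}"
    then have b: "B (srw_pos x w)" by simp
    obtain m where m: "hit_tau (srw_pos x w) D t = enat m"
      using finite[OF b] by (cases "hit_tau (srw_pos x w) D t") auto
    have "hit_tau (ext (stake m w)) D t = enat m"
      by (rule hit_tau_cong[OF m]) (simp add: agree)
    moreover have "B (ext (stake m w))" by (rule stopped[OF m agree b])
    ultimately show "w \<in> (\<Union>m. {w. Q m (stake m w)})" by (auto simp: Q_def)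
  next
    fix w assume "w \<in> (\<Union>m. {w. Q m (stake m w)})"
    then obtain m where "Q m (stake m w)" by auto
    then show "w \<in> {w. B (srw_pos x w)}"
      using stopped[of "ext (stake m w)" m "srw_pos x w"] agree by (auto simp: Q_def)
  qed
  then show ?thesis
    using sets_srw_space_stake[of "Q _"] by auto
qed

lemma sets_srw_space_profile_close: "{w. profile_close D g t c (srw_pos x w)} \<in> sets srw_space"
proof (rule sets_srw_space_stopped[where D = D and t = t])
  fix S S' m
  assume h: "hit_tau S D t = enat m" and agree: "\<And>i. i \<le> m \<Longrightarrow> S i = S' i"
    and close: "profile_close D g t c S"
  have h': "hit_tau S' D t = enat m" by (rule hit_tau_cong[OF h]) (simp add: agree)
  have "loc_time_D S' D t y = loc_time_D S D t y" for y
    using loc_time_D_eq[OF h] loc_time_D_eq[OF h'] loc_time_cong[of m S' S] agree by simp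
  with close h' show "profile_close D g t c S'" by (simp add: profile_close_def)
qed (simp add: profile_close_def)

lemma emeasure_srw_space_pos_sdrop:
  assumes "E \<in> sets srw_space"
  shows "emeasure srw_space {w. P (srw_pos x w j) \<and> sdrop j w \<in> E}
        = emeasure srw_space {w. P (srw_pos x w j)} * emeasure srw_space E"
  using assms
proof (induction j arbitrary: x)
  case 0
  then show ?case by (cases "P x") (simp_all add: srw_pos_def)
next
  case (Suc j)
  let ?M = "measure_pmf srw_step_pmf"
  have stream: "emeasure srw_space {w. Q (srw_pos x w (Suc j)) w}
      = (\<integral>\<^sup>+s. emeasure srw_space {w. Q (srw_pos (x + s) w j) (s ## w)} \<partial>?M)"
    if "{w. Q (srw_pos x w (Suc j)) w} \<in> sets srw_space" for Q
    using that unfolding srw_space_def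
    by (subst prob_space.emeasure_stream_space[OF prob_space_measure_pmf])
       (simp_all add: srw_pos_Suc space_stream_space)
  have "emeasure srw_space {w. P (srw_pos x w (Suc j)) \<and> sdrop (Suc j) w \<in> E}
      = (\<integral>\<^sup>+s. emeasure srw_space {w. P (srw_pos (x + s) w j) \<and> sdrop j w \<in> E} \<partial>?M)"
    using stream[of "\<lambda>p w. P p \<and> sdrop (Suc j) w \<in> E"]
      sets.Int[OF sets_srw_space_pos[of P x "Suc j"] sets_srw_space_sdrop[OF Suc.prems, of "Suc j"]]
    by (simp add: Collect_conj_eq)
  also have "\<dots> = (\<integral>\<^sup>+s. emeasure srw_space {w. P (srw_pos (x + s) w j)} * emeasure srw_space E \<partial>?M)"
    using Suc by simp
  also have "\<dots> = (\<integral>\<^sup>+s. emeasure srw_space {w. P (srw_pos (x + s) w j)} \<partial>?M) * emeasure srw_space E"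
    by (rule nn_integral_multc) (auto simp: measurable_def)
  also have "(\<integral>\<^sup>+s. emeasure srw_space {w. P (srw_pos (x + s) w j)} \<partial>?M)
      = emeasure srw_space {w. P (srw_pos x w (Suc j))}"
    using stream[of "\<lambda>p w. P p"] sets_srw_space_pos[of P x "Suc j"] by simp
  finally show ?case .
qed

lemma srw_prob_pos_zero_mult_le:
  assumes "0 < t" and "r + 2 * real j / real t \<le> c"
  shows "srw_prob x (\<lambda>S. S j = 0) * srw_prob 0 (profile_close D g t r)
     \<le> srw_prob x (profile_close D g t c)"
proof -
  interpret prob_space srw_space by (rule prob_space_srw_space)
  define A where "A = {w. profile_close D g t r (srw_pos 0 w)}"
  define B where "B = {w. profile_close D g t c (srw_pos x w)}"
  define C where "C = {w. srw_pos x w j = 0 \<and> sdrop j w \<in> A}"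
  have A: "A \<in> sets srw_space" and B: "B \<in> sets srw_space"
    unfolding A_def B_def by (rule sets_srw_space_profile_close)+
  have "C \<subseteq> B"
  proof
    fix w assume "w \<in> C"
    then have "srw_pos 0 (sdrop j w) = (\<lambda>i. srw_pos x w (i + j))"
      and "profile_close D g t r (srw_pos 0 (sdrop j w))"
      by (auto simp: C_def A_def srw_pos_sdrop)
    then have "profile_close D g t (r + 2 * real j / real t) (srw_pos x w)"
      using profile_close_shift[OF \<open>0 < t\<close>] by simp
    with assms(2) show "w \<in> B" by (auto simp: B_def profile_close_def)
  qed
  then have "measure srw_space C \<le> measure srw_space B"
    by (rule finite_measure_mono[OF _ B])
  moreover have "measure srw_space C = measure srw_space {w. srw_pos x w j = 0} * measure srw_space A"
    using emeasure_srw_space_pos_sdrop[OF A, of "\<lambda>p. p = 0" x j]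
    by (simp add: C_def measure_def enn2real_mult)
  ultimately show ?thesis by (simp add: srw_prob_def A_def B_def)
qed


theorem proposition3p7:
  fixes D :: "(int ^ 'd) set" and g :: "int ^ 'd \<Rightarrow> real"
    and k t :: nat and r :: real and x :: "int ^ 'd"
  assumes "(\<lambda>y. \<bar>g y\<bar>) summable_on D"
    and "0 < k" and "k < t" and "0 < r"
    and "x \<in> lattice_closure D"
  shows "srw_prob 0 (\<lambda>S. norm1_on D (\<lambda>y. real (loc_time_D S D t y) / real t - (g y)\<^sup>2) \<le> r
                          \<and> hit_tau S D t < \<infinity>)
         * (srw_prob x (\<lambda>S. S k = 0) + srw_prob x (\<lambda>S. S (k - 1) = 0))
       \<le> 2 * srw_prob x (\<lambda>S. norm1_on D (\<lambda>y. real (loc_time_D S D t y) / real t - (g y)\<^sup>2)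
                                 \<le> r + 4 * (real k / (real t - real k))
                          \<and> hit_tau S D t < \<infinity>)"
proof -
  let ?c = "r + 4 * (real k / (real t - real k))"
  have event_eq: "(\<lambda>S. norm1_on D (\<lambda>y. real (loc_time_D S D t y) / real t - (g y)\<^sup>2) \<le> c
                          \<and> hit_tau S D t < \<infinity>) = profile_close D g t c" for c
    by (simp add: fun_eq_iff profile_close_def)
  have "r + 2 * real j / real t \<le> ?c" if "j \<le> k" for j
  proof -
    have "2 * real j / real t \<le> 2 * real k / (real t - real k)"
      using that \<open>k < t\<close> by (intro frac_le) auto
    also have "\<dots> \<le> 4 * (real k / (real t - real k))"
      using \<open>k < t\<close> by (simp add: divide_simps)
    finally show ?thesis by simp
  qed
  then have "srw_prob x (\<lambda>S. S j = 0) * srw_prob 0 (profile_close D g t r)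
      \<le> srw_prob x (profile_close D g t ?c)" if "j \<le> k" for j
    using that assms(3) by (intro srw_prob_pos_zero_mult_le) auto
  from this[of k] this[of "k - 1"] show ?thesis
    unfolding event_eq by (simp add: distrib_left mult.commute)
qed

end
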